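(* Let $(V,E,c,p)$ be a PCSTP instance and let $\{v_i,v_j\}\in E$. If $$c(\{v_i,v_j\}) > d_{pc}(v_i,v_j),$$ then $\{v_i,v_j\}$ is not contained in any optimal solution of the instance.
   Context: A prize-collecting Steiner tree (PCSTP) instance $(V,E,c,p)$ consists of a finite, undirected, connected graph $G=(V,E)$, edge costs $c:E\to\mathbb{Q}_{>0}$ and vertex prizes $p:V\to\mathbb{Q}_{\ge 0}$. For a tree $S\subseteq G$ (connected acyclic subgraph with at least one vertex) let $C(S):=\sum_{e\in E(S)}c(e)+\sum_{v\in V\setminus V(S)}p(v)$; an optimal solution is a tree minimizing $C$. Let $T_p:=\{v\in V: p(v)>0\}$ (potential terminals). For $v_i,v_j\in V$, a finite walk $W=(v_{i_1},e_{i_1},v_{i_2},\dots,e_{i_{r-1}},v_{i_r})$ with $v_{i_1}=v_i$, $v_{i_r}=v_j$ is a prize-constrained $(v_i,v_j)$-walk if no vertex of $T_p\cup\{v_i,v_j\}$ occurs more than once in the sequence. $V(W)$, $E(W)$ denote the sets of vertices and edges of $W$. For $1\le k\le l\le r$, $W[k,l]$ denotes the subwalk $(v_{i_k},e_{i_k},\dots,v_{i_l})$ (itself a prize-constrained $(v_{i_k},v_{i_l})$-walk). The prize-collecting cost of a walk $W$ from $a$ to $b$ is $c_{pc}(W):=\sum_{e\in E(W)}c(e)-\sum_{v\in V(W)\setminus\{a,b\}}p(v)$. The prize-constrained length of a prize-constrained $(v_i,v_j)$-walk $W$ is $l_{pc}(W):=\max\{c_{pc}(W[k,l]) : 1\le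 k\le l\le r,\ v_{i_k},v_{i_l}\in T_p\cup\{v_i,v_j\}\}$. The prize-constrained distance is $d_{pc}(v_i,v_j):=\inf\{l_{pc}(W): W \text{ a prize-constrained } (v_i,v_j)\text{-walk}\}$. *)

theory Defs
  imports Complex_Main
begin

(* Walks are nonempty vertex lists (the graph is simple, so the edge between
   consecutive vertices is determined). Indices are 0-based. *)

definition is_walk :: "'v set \<Rightarrow> 'v set set \<Rightarrow> 'v list \<Rightarrow> bool" where
  "is_walk V E W \<longleftrightarrow> W \<noteq> [] \<and> set W \<subseteq> V \<and>
     (\<forall>k. Suc k < length W \<longrightarrow> {W ! k, W ! Suc k} \<in> E)"

definition walk_edges :: "'v list \<Rightarrow> 'v set set" where
  "walk_edges W = {{W ! k, W ! Suc k} | k. Suc k < length W}"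

definition simple_graph :: "'v set \<Rightarrow> 'v set set \<Rightarrow> bool" where
  "simple_graph V E \<longleftrightarrow> (\<forall>e\<in>E. \<exists>x y. e = {x, y} \<and> x \<noteq> y \<and> x \<in> V \<and> y \<in> V)"

definition connected_graph :: "'v set \<Rightarrow> 'v set set \<Rightarrow> bool" where
  "connected_graph V E \<longleftrightarrow> (\<forall>x\<in>V. \<forall>y\<in>V. \<exists>W. is_walk V E W \<and> hd W = x \<and> last W = y)"

definition has_cycle :: "'v set \<Rightarrow> 'v set set \<Rightarrow> bool" where
  "has_cycle V E \<longleftrightarrow> (\<exists>W. is_walk V E W \<and> distinct W \<and> length W \<ge> 3 \<and> {last W, hd W} \<in> E)"

definition is_subtree :: "'v set \<Rightarrow> 'v set set \<Rightarrow> 'v set \<Rightarrow> 'v set set \<Rightarrow> bool" where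
  "is_subtree V E VS ES \<longleftrightarrow> VS \<noteq> {} \<and> VS \<subseteq> V \<and> ES \<subseteq> E \<and> (\<forall>e\<in>ES. e \<subseteq> VS) \<and>
     connected_graph VS ES \<and> \<not> has_cycle VS ES"

definition pcst_cost :: "'v set \<Rightarrow> ('v set \<Rightarrow> real) \<Rightarrow> ('v \<Rightarrow> real) \<Rightarrow> 'v set \<Rightarrow> 'v set set \<Rightarrow> real" where
  "pcst_cost V c p VS ES = (\<Sum>e\<in>ES. c e) + (\<Sum>v\<in>V - VS. p v)"

definition optimal_solution ::
  "'v set \<Rightarrow> 'v set set \<Rightarrow> ('v set \<Rightarrow> real) \<Rightarrow> ('v \<Rightarrow> real) \<Rightarrow> 'v set \<Rightarrow> 'v set set \<Rightarrow> bool" where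
  "optimal_solution V E c p VS ES \<longleftrightarrow> is_subtree V E VS ES \<and>
     (\<forall>VS' ES'. is_subtree V E VS' ES' \<longrightarrow> pcst_cost V c p VS ES \<le> pcst_cost V c p VS' ES')"

definition Tp :: "'v set \<Rightarrow> ('v \<Rightarrow> real) \<Rightarrow> 'v set" where
  "Tp V p = {v \<in> V. p v > 0}"

definition pc_walk :: "'v set \<Rightarrow> 'v set set \<Rightarrow> ('v \<Rightarrow> real) \<Rightarrow> 'v \<Rightarrow> 'v \<Rightarrow> 'v list \<Rightarrow> bool" where
  "pc_walk V E p a b W \<longleftrightarrow> is_walk V E W \<and> hd W = a \<and> last W = b \<and>
     (\<forall>x \<in> Tp V p \<union> {a, b}. count_list W x \<le> 1)"

(* subwalk W[k,l], 0-based, k \<le> l < length W *)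
definition subwalk :: "'v list \<Rightarrow> nat \<Rightarrow> nat \<Rightarrow> 'v list" where
  "subwalk W k l = drop k (take (Suc l) W)"

definition c_pc :: "('v set \<Rightarrow> real) \<Rightarrow> ('v \<Rightarrow> real) \<Rightarrow> 'v list \<Rightarrow> real" where
  "c_pc c p W = (\<Sum>e\<in>walk_edges W. c e) - (\<Sum>v\<in>set W - {hd W, last W}. p v)"

definition l_pc :: "'v set \<Rightarrow> ('v set \<Rightarrow> real) \<Rightarrow> ('v \<Rightarrow> real) \<Rightarrow> 'v \<Rightarrow> 'v \<Rightarrow> 'v list \<Rightarrow> real" where
  "l_pc V c p a b W = Max {c_pc c p (subwalk W k l) | k l.
      k \<le> l \<and> l < length W \<and> W ! k \<in> Tp V p \<union> {a, b} \<and> W ! l \<in> Tp V p \<union> {a, b}}"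

definition d_pc :: "'v set \<Rightarrow> 'v set set \<Rightarrow> ('v set \<Rightarrow> real) \<Rightarrow> ('v \<Rightarrow> real) \<Rightarrow> 'v \<Rightarrow> 'v \<Rightarrow> real" where
  "d_pc V E c p a b = Inf {l_pc V c p a b W | W. pc_walk V E p a b W}"

end

theory Submission
  imports Defs
begin

(* Suppose e = {vi, vj} lies in an optimal tree (VS, ES). In ES - {e} every vertex of VS is joined
   to vi or to vj. If vj is joined to vi, then ES - {e} still spans VS and dropping e is cheaper.
   Otherwise take a prize-constrained walk W from vi to vj with l_pc W < c e and cut out the subwalk
   from the last potential terminal in the vi-part of the tree to the first potential terminal in
   the vj-part after it. Its inner potential terminals lie outside VS, so replacing e by this subwalk
   and passing to a spanning tree changes the cost by at most c_pc(subwalk) - c e <= l_pc W - c e < 0. *)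

definition reach :: "'v set \<Rightarrow> 'v set set \<Rightarrow> 'v \<Rightarrow> 'v \<Rightarrow> bool" where
  "reach VS F x y \<longleftrightarrow> (\<exists>W. is_walk VS F W \<and> hd W = x \<and> last W = y)"

lemma connected_graph_iff_reach:
  "connected_graph VS F \<longleftrightarrow> (\<forall>x\<in>VS. \<forall>y\<in>VS. reach VS F x y)"
  unfolding connected_graph_def reach_def by blast

lemma is_walk_Cons:
  assumes "W \<noteq> []"
  shows "is_walk VS F (x # W) \<longleftrightarrow> x \<in> VS \<and> {x, hd W} \<in> F \<and> is_walk VS F W"
proof
  assume h: "is_walk VS F (x # W)"
  then have "{(x # W) ! 0, (x # W) ! Suc 0} \<in> F" using assms unfolding is_walk_def by auto
  moreover have "{W ! k, W ! Suc k} \<in> F" if "Suc k < length W" for k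
    using h that unfolding is_walk_def by (metis Suc_less_eq length_Cons nth_Cons_Suc)
  ultimately show "x \<in> VS \<and> {x, hd W} \<in> F \<and> is_walk VS F W"
    using h assms unfolding is_walk_def by (auto simp: hd_conv_nth)
next
  assume h: "x \<in> VS \<and> {x, hd W} \<in> F \<and> is_walk VS F W"
  have "{(x # W) ! k, (x # W) ! Suc k} \<in> F" if "Suc k < length (x # W)" for k
    using h that assms unfolding is_walk_def by (cases k) (auto simp: hd_conv_nth)
  then show "is_walk VS F (x # W)" using h unfolding is_walk_def by auto
qed

lemma is_walk_rev:
  assumes "is_walk VS F W"
  shows "is_walk VS F (rev W)"
proof -
  have "{rev W ! k, rev W ! Suc k} \<in> F" if k: "Suc k < length W" for k
  proof -
    define m where "m = length W - Suc (Suc k)"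
    have "Suc m < length W" "Suc m = length W - Suc k" using k unfolding m_def by auto
    then have "{W ! m, W ! Suc m} \<in> F" using assms unfolding is_walk_def by blast
    moreover have "rev W ! k = W ! Suc m" "rev W ! Suc k = W ! m"
      using k \<open>Suc m = length W - Suc k\<close> by (simp_all add: rev_nth m_def)
    ultimately show ?thesis by (simp add: insert_commute)
  qed
  then show ?thesis using assms unfolding is_walk_def by auto
qed

lemma walk_set_subset_closed:
  assumes "is_walk VS F W" "last W \<in> R"
    and step: "\<And>x y. x \<in> VS \<Longrightarrow> {x, y} \<in> F \<Longrightarrow> y \<in> R \<Longrightarrow> x \<in> R"
  shows "set W \<subseteq> R"
  using assms(1,2)
proof (induction W)
  case Nil
  then show ?case by simp
next
  case (Cons x W)
  show ?case
  proof (cases "W = []")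
    case True
    then show ?thesis using Cons.prems by simp
  next
    case False
    then have x: "x \<in> VS" "{x, hd W} \<in> F" and W: "is_walk VS F W"
      using Cons.prems(1) is_walk_Cons by metis+
    have "set W \<subseteq> R" using Cons.IH[OF W] Cons.prems(2) False by simp
    then have "x \<in> R" using step[OF x] False by (meson hd_in_set subsetD)
    then show ?thesis using \<open>set W \<subseteq> R\<close> by simp
  qed
qed

lemma reach_refl: "x \<in> VS \<Longrightarrow> reach VS F x x"
  unfolding reach_def by (rule exI[of _ "[x]"]) (auto simp: is_walk_def)

lemma reach_in: "reach VS F x y \<Longrightarrow> x \<in> VS \<and> y \<in> VS"
  unfolding reach_def is_walk_def by auto

lemma reach_step:
  assumes "x \<in> VS" "{x, y} \<in> F" "reach VS F y z"
  shows "reach VS F x z"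
proof -
  obtain W where W: "is_walk VS F W" "hd W = y" "last W = z" using assms(3) unfolding reach_def by blast
  then have "W \<noteq> []" unfolding is_walk_def by auto
  then have "is_walk VS F (x # W)" using W assms is_walk_Cons by metis
  then show ?thesis using W \<open>W \<noteq> []\<close> unfolding reach_def by (intro exI[of _ "x # W"]) auto
qed

lemma walk_reach_last:
  assumes "is_walk VS F W" "x \<in> set W"
  shows "reach VS F x (last W)"
proof -
  have "last W \<in> VS" using assms(1) unfolding is_walk_def by auto
  then have "set W \<subseteq> {z. reach VS F z (last W)}"
    using walk_set_subset_closed[OF assms(1)] reach_refl reach_step by (metis mem_Collect_eq)
  then show ?thesis using assms(2) by auto
qed

lemma reach_trans:
  assumes "reach VS F x y" "reach VS F y z"
  shows "reach VS F x z"
proof -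
  obtain W where W: "is_walk VS F W" "hd W = x" "last W = y" using assms(1) unfolding reach_def by blast
  have "set W \<subseteq> {w. reach VS F w z}"
    using walk_set_subset_closed[OF W(1)] reach_step assms(2) W(3) by (metis mem_Collect_eq)
  moreover have "x \<in> set W" using W unfolding is_walk_def by auto
  ultimately show ?thesis by auto
qed

lemma reach_sym: "reach VS F x y \<Longrightarrow> reach VS F y x"
  unfolding reach_def using is_walk_rev by (metis hd_rev last_rev)

lemma reach_mono: "reach VS F x y \<Longrightarrow> VS \<subseteq> VS' \<Longrightarrow> F \<subseteq> F' \<Longrightarrow> reach VS' F' x y"
  unfolding reach_def is_walk_def by blast

lemma connected_graph_rejoin:
  assumes "a \<in> VS" and cover: "\<forall>x\<in>VS. reach VS F x a \<or> reach VS F x b" and "reach VS F b a"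
  shows "connected_graph VS F"
proof -
  have to_a: "reach VS F x a" if "x \<in> VS" for x
    using cover that reach_trans[OF _ assms(3), of x] by blast
  show ?thesis unfolding connected_graph_iff_reach
  proof (intro ballI)
    fix x y assume "x \<in> VS" "y \<in> VS"
    show "reach VS F x y" using reach_trans[OF to_a[OF \<open>x \<in> VS\<close>] reach_sym[OF to_a[OF \<open>y \<in> VS\<close>]]] .
  qed
qed

lemma reach_delete_edge:
  assumes "connected_graph VS F" "a \<in> VS" "x \<in> VS"
  shows "reach VS (F - {{a, b}}) x a \<or> reach VS (F - {{a, b}}) x b"
proof -
  let ?R = "{z. reach VS (F - {{a, b}}) z a \<or> reach VS (F - {{a, b}}) z b}"
  obtain W where W: "is_walk VS F W" "hd W = x" "last W = a"
    using assms unfolding connected_graph_iff_reach reach_def by blast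
  have "set W \<subseteq> ?R"
  proof (rule walk_set_subset_closed[OF W(1)])
    show "last W \<in> ?R" using W(3) reach_refl[OF assms(2)] by simp
  next
    fix y z assume yz: "y \<in> VS" "{y, z} \<in> F" "z \<in> ?R"
    show "y \<in> ?R"
    proof (cases "{y, z} = {a, b}")
      case True
      then have "y = a \<or> y = b" by (simp add: doubleton_eq_iff) blast
      then show ?thesis using reach_refl[OF yz(1)] by blast
    next
      case False
      then show ?thesis using yz reach_step[of y VS z "F - {{a, b}}"] by blast
    qed
  qed
  moreover have "x \<in> set W" using W unfolding is_walk_def by auto
  ultimately show ?thesis by auto
qed

lemma connected_graph_add_walk:
  assumes cover: "\<forall>x\<in>VS. reach VS F x a \<or> reach VS F x b"
    and "W \<noteq> []" "reach VS F (hd W) a" "reach VS F (last W) b"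
  shows "connected_graph (VS \<union> set W) (F \<union> walk_edges W)"
proof -
  let ?VS = "VS \<union> set W" and ?F = "F \<union> walk_edges W"
  have W: "is_walk ?VS ?F W" using assms(2) unfolding is_walk_def walk_edges_def by auto
  have mono: "reach ?VS ?F x y" if "reach VS F x y" for x y using reach_mono[OF that] by blast
  have "reach ?VS ?F (last W) (hd W)"
    using walk_reach_last[OF is_walk_rev[OF W]] assms(2) by (simp add: last_rev)
  then have "reach ?VS ?F b a"
    using reach_trans[OF reach_sym[OF mono[OF assms(4)]] reach_trans[OF _ mono[OF assms(3)]]] by blast
  moreover have "reach ?VS ?F x a \<or> reach ?VS ?F x b" if "x \<in> ?VS" for x
  proof (cases "x \<in> VS")
    case True
    then show ?thesis using cover mono by blast
  next
    case False
    then have "reach ?VS ?F x (last W)" using that walk_reach_last[OF W] by simp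
    then show ?thesis using reach_trans[OF _ mono[OF assms(4)]] by blast
  qed
  moreover have "a \<in> ?VS" using reach_in[OF assms(3)] by simp
  ultimately show ?thesis by (intro connected_graph_rejoin) auto
qed

lemma cycle_closing_edge_not_on_path:
  assumes "distinct W" "length W \<ge> 3" "Suc k < length W"
  shows "{W ! k, W ! Suc k} \<noteq> {last W, hd W}"
proof
  assume edge: "{W ! k, W ! Suc k} = {last W, hd W}"
  have "W \<noteq> []" using assms(2) by auto
  then have "last W = W ! (length W - 1)" "hd W = W ! 0" by (simp_all add: last_conv_nth hd_conv_nth)
  with edge have "(W ! k = W ! (length W - 1) \<and> W ! Suc k = W ! 0) \<or> (W ! k = W ! 0 \<and> W ! Suc k = W ! (length W - 1))"
    by (simp add: doubleton_eq_iff)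
  moreover have "W ! i = W ! j \<longleftrightarrow> i = j" if "i < length W" "j < length W" for i j
    using nth_eq_iff_index_eq[OF assms(1) that] .
  ultimately have "(k = length W - 1 \<and> Suc k = 0) \<or> (k = 0 \<and> Suc k = length W - 1)"
    using assms(3) \<open>W \<noteq> []\<close> by (metis Suc_lessD diff_less length_greater_0_conv zero_less_one)
  then show False using assms by auto
qed

lemma connected_graph_delete_cycle_edge:
  assumes "connected_graph VS F" "is_walk VS F W" "distinct W" "length W \<ge> 3"
  shows "connected_graph VS (F - {{last W, hd W}})"
proof (rule connected_graph_rejoin)
  have "W \<noteq> []" using assms(2) unfolding is_walk_def by auto
  then show "last W \<in> VS" using assms(2) unfolding is_walk_def by auto
  show "\<forall>x\<in>VS. reach VS (F - {{last W, hd W}}) x (last W) \<or> reach VS (F - {{last W, hd W}}) x (hd W)"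
    using reach_delete_edge[OF assms(1) \<open>last W \<in> VS\<close>] by blast
  have "is_walk VS (F - {{last W, hd W}}) W"
    using assms cycle_closing_edge_not_on_path unfolding is_walk_def by blast
  then show "reach VS (F - {{last W, hd W}}) (hd W) (last W)" unfolding reach_def by blast
qed

lemma connected_graph_spanning_subtree:
  assumes "finite F" "connected_graph VS F" "VS \<noteq> {}" "VS \<subseteq> V" "F \<subseteq> E" "\<forall>e\<in>F. e \<subseteq> VS"
  shows "\<exists>F'\<subseteq>F. is_subtree V E VS F'"
  using assms
proof (induction "card F" arbitrary: F rule: less_induct)
  case less
  show ?case
  proof (cases "has_cycle VS F")
    case False
    then show ?thesis using less.prems unfolding is_subtree_def by blast
  next
    case True
    then obtain W where W: "is_walk VS F W" "distinct W" "length W \<ge> 3" "{last W, hd W} \<in> F"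
      unfolding has_cycle_def by blast
    let ?F = "F - {{last W, hd W}}"
    have "connected_graph VS ?F" using connected_graph_delete_cycle_edge[OF less.prems(2) W(1-3)] .
    moreover have "card ?F < card F" using W(4) less.prems(1) by (metis card_Diff1_less)
    ultimately obtain F' where "F' \<subseteq> ?F" "is_subtree V E VS F'"
      using less.hyps[of ?F] less.prems by blast
    then show ?thesis by blast
  qed
qed

lemma optimal_solution_cost_le_connected:
  assumes "optimal_solution V E c p VS ES" "\<forall>e\<in>E. c e \<ge> 0"
    and "finite F" "connected_graph VS' F" "VS' \<noteq> {}" "VS' \<subseteq> V" "F \<subseteq> E" "\<forall>e\<in>F. e \<subseteq> VS'"
  shows "pcst_cost V c p VS ES \<le> sum c F + sum p (V - VS')"
proof -
  obtain F' where F': "F' \<subseteq> F" "is_subtree V E VS' F'"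
    using connected_graph_spanning_subtree[OF assms(3-8)] by blast
  have "sum c F' \<le> sum c F" using assms(2,3,7) F'(1) by (intro sum_mono2) auto
  moreover have "pcst_cost V c p VS ES \<le> pcst_cost V c p VS' F'"
    using assms(1) F'(2) unfolding optimal_solution_def by blast
  ultimately show ?thesis unfolding pcst_cost_def by linarith
qed

lemma length_subwalk: "u < length W \<Longrightarrow> length (subwalk W s u) = Suc u - s"
  unfolding subwalk_def by simp

lemma nth_subwalk: "u < length W \<Longrightarrow> s + i \<le> u \<Longrightarrow> subwalk W s u ! i = W ! (s + i)"
  unfolding subwalk_def by simp

lemma hd_subwalk: "s \<le> u \<Longrightarrow> u < length W \<Longrightarrow> hd (subwalk W s u) = W ! s"
  using nth_subwalk[of u W s 0] by (simp add: hd_conv_nth length_subwalk flip: length_greater_0_conv)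

lemma last_subwalk: "s \<le> u \<Longrightarrow> u < length W \<Longrightarrow> last (subwalk W s u) = W ! u"
  using nth_subwalk[of u W s "u - s"] by (simp add: last_conv_nth length_subwalk flip: length_greater_0_conv)

lemma set_subwalk:
  assumes "u < length W"
  shows "set (subwalk W s u) = {W ! (s + i) | i. s + i \<le> u}"
proof (intro set_eqI iffI)
  fix x assume "x \<in> set (subwalk W s u)"
  then obtain i where "i < Suc u - s" "x = subwalk W s u ! i"
    using assms by (auto simp: in_set_conv_nth length_subwalk)
  then show "x \<in> {W ! (s + i) | i. s + i \<le> u}" using assms nth_subwalk[of u W s i] by auto
next
  fix x assume "x \<in> {W ! (s + i) | i. s + i \<le> u}"
  then obtain i where "s + i \<le> u" "x = W ! (s + i)" by blast
  then show "x \<in> set (subwalk W s u)" using assms nth_subwalk[of u W s i]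
    by (auto simp: in_set_conv_nth length_subwalk intro!: exI[of _ i])
qed

lemma is_walk_subwalk:
  assumes "is_walk V E W" "s \<le> u" "u < length W"
  shows "is_walk V E (subwalk W s u)"
proof -
  have "{W ! (s + k), W ! Suc (s + k)} \<in> E" if "Suc k < Suc u - s" for k
    using assms that unfolding is_walk_def by auto
  moreover have "subwalk W s u \<noteq> []" using assms(2,3) by (simp add: length_subwalk flip: length_greater_0_conv)
  ultimately show ?thesis using assms unfolding is_walk_def
    by (auto simp: length_subwalk nth_subwalk set_subwalk)
qed

lemma list_crossing_indices:
  assumes "W ! 0 \<in> A" "W ! (length W - 1) \<in> B" "A \<inter> B = {}" "W \<noteq> []"
  obtains s u where "s < u" "u < length W" "W ! s \<in> A" "W ! u \<in> B"
    "\<And>j. s < j \<Longrightarrow> j < u \<Longrightarrow> W ! j \<notin> A \<union> B"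
proof -
  let ?P = "\<lambda>i. i < length W \<and> W ! i \<in> B"
  define u where "u = (LEAST i. ?P i)"
  have "?P (length W - 1)" using assms(2,4) by simp
  then have u: "u < length W" "W ! u \<in> B" using LeastI[of ?P] unfolding u_def by blast+
  have u_least: "W ! i \<notin> B" if "i < u" for i
    using not_less_Least[of i ?P] that u(1) unfolding u_def by simp
  have "u \<noteq> 0" using u(2) assms(1,3) by auto
  let ?Q = "\<lambda>j. j < u \<and> W ! j \<in> A \<union> B"
  define s where "s = (GREATEST j. ?Q j)"
  have "?Q 0" using \<open>u \<noteq> 0\<close> assms(1) by simp
  then have s: "s < u" "W ! s \<in> A \<union> B"
    using GreatestI_nat[of ?Q 0 u] unfolding s_def by auto
  have "W ! j \<notin> A \<union> B" if "s < j" "j < u" for j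
    using Greatest_le_nat[of ?Q j u] that unfolding s_def by auto
  moreover have "W ! s \<in> A" using s u_least by blast
  ultimately show ?thesis using that s(1) u by blast
qed

lemma c_pc_subwalk_le_l_pc:
  assumes "k \<le> l" "l < length W" "W ! k \<in> Tp V p \<union> {a, b}" "W ! l \<in> Tp V p \<union> {a, b}"
  shows "c_pc c p (subwalk W k l) \<le> l_pc V c p a b W"
proof -
  let ?Y = "{c_pc c p (subwalk W k l) | k l.
    k \<le> l \<and> l < length W \<and> W ! k \<in> Tp V p \<union> {a, b} \<and> W ! l \<in> Tp V p \<union> {a, b}}"
  have "?Y \<subseteq> (\<lambda>(k, l). c_pc c p (subwalk W k l)) ` ({..<length W} \<times> {..<length W})" by auto
  then have "finite ?Y" by (rule finite_subset) simp
  then show ?thesis unfolding l_pc_def using assms by (intro Max_ge) blast+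
qed

lemma l_pc_nonneg:
  assumes "pc_walk V E p a b W"
  shows "0 \<le> l_pc V c p a b W"
proof -
  have "W \<noteq> []" "hd W = a" using assms unfolding pc_walk_def is_walk_def by auto
  then have "subwalk W 0 0 = [a]" "W ! 0 = a" unfolding subwalk_def by (auto simp: hd_conv_nth neq_Nil_conv)
  moreover have "c_pc c p [a] = 0" unfolding c_pc_def walk_edges_def by simp
  ultimately show ?thesis using c_pc_subwalk_le_l_pc[of 0 0 W V p a b c] \<open>W \<noteq> []\<close> by simp
qed

lemma d_pc_lessE:
  assumes "{a, b} \<in> E" "a \<in> V" "b \<in> V" "a \<noteq> b" "d_pc V E c p a b < r"
  obtains W where "pc_walk V E p a b W" "l_pc V c p a b W < r"
proof -
  have "pc_walk V E p a b [a, b]" using assms(1-4) unfolding pc_walk_def is_walk_def by auto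
  then have "{l_pc V c p a b W | W. pc_walk V E p a b W} \<noteq> {}" by blast
  from cInf_lessD[OF this assms(5)[unfolded d_pc_def]] that show ?thesis by blast
qed

lemma pc_walk_crossing_subwalk:
  assumes W: "pc_walk V E p a b W" and "a \<in> C" "C \<subseteq> VS" "b \<in> VS - C"
  obtains S where "is_walk V E S" "hd S \<in> C" "last S \<in> VS - C" "c_pc c p S \<le> l_pc V c p a b W"
    "\<forall>x\<in>set S - {hd S, last S}. x \<in> Tp V p \<longrightarrow> x \<notin> VS"
proof -
  let ?T = "Tp V p \<union> {a, b}"
  have Ww: "is_walk V E W" "W \<noteq> []" "W ! 0 = a" "W ! (length W - 1) = b"
    using W unfolding pc_walk_def is_walk_def by (auto simp: hd_conv_nth last_conv_nth)
  obtain s u where su: "s < u" "u < length W" "W ! s \<in> ?T \<inter> C" "W ! u \<in> ?T \<inter> (VS - C)"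
    and between: "\<And>j. s < j \<Longrightarrow> j < u \<Longrightarrow> W ! j \<notin> (?T \<inter> C) \<union> (?T \<inter> (VS - C))"
    using list_crossing_indices[of W "?T \<inter> C" "?T \<inter> (VS - C)"] Ww(2-4) assms(2-4) by blast
  let ?S = "subwalk W s u"
  have ends: "hd ?S = W ! s" "last ?S = W ! u" using su by (simp_all add: hd_subwalk last_subwalk)
  have "\<forall>x\<in>set ?S - {hd ?S, last ?S}. x \<in> Tp V p \<longrightarrow> x \<notin> VS"
  proof (intro ballI impI notI)
    fix x assume x: "x \<in> set ?S - {hd ?S, last ?S}" "x \<in> Tp V p" "x \<in> VS"
    then obtain i where "s + i \<le> u" "x = W ! (s + i)" using set_subwalk[OF su(2)] by auto
    moreover have "i \<noteq> 0" "s + i \<noteq> u" using x(1) ends \<open>x = W ! (s + i)\<close> by (metis DiffE add_0_right insertCI)+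
    ultimately show False using between[of "s + i"] x(2,3) by auto
  qed
  moreover have "c_pc c p ?S \<le> l_pc V c p a b W" using su by (intro c_pc_subwalk_le_l_pc) auto
  moreover have "is_walk V E ?S" using is_walk_subwalk[OF Ww(1)] su by simp
  moreover have "hd ?S \<in> C" "last ?S \<in> VS - C" using ends su(3,4) by auto
  ultimately show ?thesis using that by blast
qed

lemma prize_sum_add_walk_le:
  assumes "finite V" "set S \<subseteq> V" "\<forall>v\<in>V. p v \<ge> 0"
    and "\<forall>x\<in>set S - {hd S, last S}. x \<in> Tp V p \<longrightarrow> x \<notin> VS"
  shows "sum p (V - (VS \<union> set S)) + sum p (set S - {hd S, last S}) \<le> sum p (V - VS)"
proof -
  let ?I = "set S - {hd S, last S}"
  have "sum p ?I = sum p (?I \<inter> Tp V p) + sum p (?I - Tp V p)" by (simp add: sum.Int_Diff)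
  moreover have "sum p (?I - Tp V p) \<le> 0" using assms(2,3) by (intro sum_nonpos) (auto simp: Tp_def)
  moreover have "sum p (?I \<inter> Tp V p) \<le> sum p (set S - VS)"
    using assms(2-4) by (intro sum_mono2) (auto simp: Tp_def)
  moreover have "sum p (V - VS) = sum p (V - (VS \<union> set S)) + sum p (set S - VS)"
  proof -
    have "V - VS = (V - (VS \<union> set S)) \<union> (set S - VS)" using assms(2) by auto
    moreover have "sum p ((V - (VS \<union> set S)) \<union> (set S - VS)) = sum p (V - (VS \<union> set S)) + sum p (set S - VS)"
      using assms(1) by (intro sum.union_disjoint) auto
    ultimately show ?thesis by simp
  qed
  ultimately show ?thesis by linarith
qed

lemma optimal_solution_cost_le_add_walk:
  assumes opt: "optimal_solution V E c p VS ES" and "finite V"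
    and c: "\<forall>e\<in>E. c e \<ge> 0" and p: "\<forall>v\<in>V. p v \<ge> 0"
    and F: "finite F" "F \<subseteq> E" "\<forall>e\<in>F. e \<subseteq> VS"
    and S: "is_walk V E S" and conn: "connected_graph (VS \<union> set S) (F \<union> walk_edges S)"
    and interior: "\<forall>x\<in>set S - {hd S, last S}. x \<in> Tp V p \<longrightarrow> x \<notin> VS"
  shows "pcst_cost V c p VS ES \<le> sum c F + c_pc c p S + sum p (V - VS)"
proof -
  let ?WE = "walk_edges S"
  have "is_subtree V E VS ES" using opt unfolding optimal_solution_def by blast
  then have VS: "VS \<noteq> {}" "VS \<subseteq> V" unfolding is_subtree_def by blast+
  have "set S \<subseteq> V" "?WE \<subseteq> E" using S unfolding is_walk_def walk_edges_def by auto
  have "?WE \<subseteq> (\<lambda>k. {S ! k, S ! Suc k}) ` {..<length S}" unfolding walk_edges_def by auto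
  then have "finite ?WE" by (rule finite_subset) simp
  have "pcst_cost V c p VS ES \<le> sum c (F \<union> ?WE) + sum p (V - (VS \<union> set S))"
  proof (rule optimal_solution_cost_le_connected[OF opt c _ conn])
    show "finite (F \<union> ?WE)" using F(1) \<open>finite ?WE\<close> by simp
    show "VS \<union> set S \<noteq> {}" "VS \<union> set S \<subseteq> V" using VS \<open>set S \<subseteq> V\<close> by auto
    show "F \<union> ?WE \<subseteq> E" using F(2) \<open>?WE \<subseteq> E\<close> by simp
    show "\<forall>e\<in>F \<union> ?WE. e \<subseteq> VS \<union> set S"
      using F(3) unfolding walk_edges_def by (auto simp: nth_mem)
  qed
  moreover have "0 \<le> sum c (F \<inter> ?WE)" using c F(2) by (intro sum_nonneg) auto
  then have "sum c (F \<union> ?WE) \<le> sum c F + sum c ?WE"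
    using sum_Un[OF F(1) \<open>finite ?WE\<close>, of c] by linarith
  moreover have "c_pc c p S = sum c ?WE - sum p (set S - {hd S, last S})" unfolding c_pc_def ..
  ultimately show ?thesis
    using prize_sum_add_walk_le[OF \<open>finite V\<close> \<open>set S \<subseteq> V\<close> p interior] by linarith
qed

lemma optimal_solution_cost_le_pc_walk:
  assumes opt: "optimal_solution V E c p VS ES" and "finite V"
    and c: "\<forall>e\<in>E. c e \<ge> 0" and p: "\<forall>v\<in>V. p v \<ge> 0"
    and F: "finite F" "F \<subseteq> E" "\<forall>e\<in>F. e \<subseteq> VS"
    and cover: "\<forall>x\<in>VS. reach VS F x a \<or> reach VS F x b"
    and ab: "a \<in> VS" "b \<in> VS" and W: "pc_walk V E p a b W"
  shows "pcst_cost V c p VS ES \<le> sum c F + l_pc V c p a b W + sum p (V - VS)"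
proof (cases "reach VS F b a")
  case True
  have "is_subtree V E VS ES" using opt unfolding optimal_solution_def by blast
  then have VS: "VS \<noteq> {}" "VS \<subseteq> V" unfolding is_subtree_def by blast+
  from True have "connected_graph VS F" using connected_graph_rejoin[OF ab(1) cover] by blast
  then show ?thesis
    using optimal_solution_cost_le_connected[OF opt c F(1) _ VS F(2,3)] l_pc_nonneg[OF W, of c] by fastforce
next
  case False
  let ?C = "{x \<in> VS. reach VS F x a}"
  have "a \<in> ?C" "b \<in> VS - ?C" using reach_refl ab False by auto
  then obtain S where S: "is_walk V E S" "hd S \<in> ?C" "last S \<in> VS - ?C" "c_pc c p S \<le> l_pc V c p a b W"
      and interior: "\<forall>x\<in>set S - {hd S, last S}. x \<in> Tp V p \<longrightarrow> x \<notin> VS"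
    using pc_walk_crossing_subwalk[OF W, of ?C VS] by blast
  have "S \<noteq> []" using S(1) unfolding is_walk_def by blast
  moreover have "reach VS F (last S) b" using cover S(3) by blast
  ultimately have "connected_graph (VS \<union> set S) (F \<union> walk_edges S)"
    using connected_graph_add_walk[OF cover] S(2) by blast
  then show ?thesis
    using optimal_solution_cost_le_add_walk[OF opt \<open>finite V\<close> c p F S(1) _ interior] S(4) by linarith
qed

theorem proposition1:
  fixes V :: "'v set" and E :: "'v set set"
    and c :: "'v set \<Rightarrow> real" and p :: "'v \<Rightarrow> real"
    and vi vj :: 'v
  assumes "finite V" "V \<noteq> {}"
    and "simple_graph V E"
    and "connected_graph V E"
    and "\<forall>e\<in>E. c e \<in> \<rat> \<and> c e > 0"
    and "\<forall>v\<in>V. p v \<in> \<rat> \<and> p v \<ge> 0"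
    and "{vi, vj} \<in> E"
    and "c {vi, vj} > d_pc V E c p vi vj"
  shows "\<forall>VS ES. optimal_solution V E c p VS ES \<longrightarrow> {vi, vj} \<notin> ES"
proof (intro allI impI notI)
  fix VS ES assume opt: "optimal_solution V E c p VS ES" and e: "{vi, vj} \<in> ES"
  have tree: "ES \<subseteq> E" "\<forall>e\<in>ES. e \<subseteq> VS" "connected_graph VS ES" "VS \<subseteq> V"
    using opt unfolding optimal_solution_def is_subtree_def by blast+
  have "E \<subseteq> Pow V" using assms(3) unfolding simple_graph_def by auto
  then have "finite E" using assms(1) by (simp add: finite_subset)
  then have "finite ES" using tree(1) finite_subset by blast
  have ends: "vi \<in> VS" "vj \<in> VS" "vi \<noteq> vj"
    using tree(2) e assms(3,7) unfolding simple_graph_def by (auto simp: doubleton_eq_iff)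
  let ?F = "ES - {{vi, vj}}"
  obtain W where W: "pc_walk V E p vi vj W" "l_pc V c p vi vj W < c {vi, vj}"
    using d_pc_lessE[OF assms(7) _ _ ends(3) assms(8)] ends tree(4) by blast
  have c: "\<forall>e\<in>E. c e \<ge> 0" and p: "\<forall>v\<in>V. p v \<ge> 0" using assms(5,6) by (auto simp: less_imp_le)
  have "\<forall>x\<in>VS. reach VS ?F x vi \<or> reach VS ?F x vj" using reach_delete_edge[OF tree(3) ends(1)] by blast
  moreover have "finite ?F" "?F \<subseteq> E" "\<forall>e\<in>?F. e \<subseteq> VS" using \<open>finite ES\<close> tree(1,2) by auto
  ultimately have "pcst_cost V c p VS ES \<le> sum c ?F + l_pc V c p vi vj W + sum p (V - VS)"
    using optimal_solution_cost_le_pc_walk[OF opt assms(1) c p _ _ _ _ ends(1,2) W(1)] by blast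
  moreover have "pcst_cost V c p VS ES = sum c ?F + c {vi, vj} + sum p (V - VS)"
    unfolding pcst_cost_def using e \<open>finite ES\<close> by (simp add: sum_diff1)
  ultimately show False using W(2) by linarith
qed

end
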